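(* Let $(a,b,c,\lambda,\delta)\in(\mathbb F^\times)^4\times\mathbb F$ and let $\nu\in\mathbb F^\times$ satisfy $\nu^{d'}+\nu^{-d'}=\delta+a^{d'}\lambda^{-d'}+a^{-d'}\lambda^{d'}$. Put $\vartheta_i=\nu^{-1}q^{2i}+\nu q^{-2i}$. Then the characteristic polynomial of $A$ acting on $W_\lambda^\delta(a,b,c)$ is $\prod_{i=0}^{d'-1}(x-\vartheta_i)$, and this equals $\prod_{i=0}^{d'-1}(x-\theta_i)-\delta$.
   Context: $\mathbb F$ is an algebraically closed field and $q\in\mathbb F^\times$ a root of unity of order $d\notin\{1,2,4\}$; $d'=d$ if $d$ odd, $d'=d/2$ if $d$ even. $\triangle_q$ is the unital associative $\mathbb F$-algebra with generators $A,B,C$ subject to: each of $A+\frac{qBC-q^{-1}CB}{q^2-q^{-2}}$, $B+\frac{qCA-q^{-1}AC}{q^2-q^{-2}}$, $C+\frac{qAB-q^{-1}BA}{q^2-q^{-2}}$ is central; $\alpha,\beta,\gamma$ are these times $q+q^{-1}$. For $(a,b,c,\lambda)\in(\mathbb F^\times)^4$, $i\in\mathbb N$: $\theta_i=a\lambda^{-1}q^{2i}+a^{-1}\lambda q^{-2i}$, $\theta_i^*=b\lambda^{-1}q^{2i}+b^{-1}\lambda q^{-2i}$, $\varphi_i=a^{-1}b^{-1}\lambda q(q^i-q^{-i})(\lambda^{-1}q^{i-1}-\lambda q^{1-i})(q^{-i}-abc\lambda^{-1}q^{i-1})(q^{-i}-abc^{-1}\lambda^{-1}q^{i-1})$. $M_\lambda(a,b,c)$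 has basis $\{m_i\}_{i\in\mathbb N}$, $(A-\theta_i)m_i=m_{i+1}$, $(B-\theta_i^* )m_i=\varphi_im_{i-1}$, $\alpha,\beta,\gamma$ acting as $(b+b^{-1})(c+c^{-1})+(a+a^{-1})(\lambda q+\lambda^{-1}q^{-1})$, $(c+c^{-1})(a+a^{-1})+(b+b^{-1})(\lambda q+\lambda^{-1}q^{-1})$, $(a+a^{-1})(b+b^{-1})+(c+c^{-1})(\lambda q+\lambda^{-1}q^{-1})$. $W_\lambda^\delta(a,b,c)$ is the quotient of $M_\lambda(a,b,c)$ by the span of $\{\delta m_i-m_{d'+i}\}_{i\in\mathbb N}$ (dimension $d'$). *)

theory Defs
  imports "HOL-Computational_Algebra.Polynomial" "Jordan_Normal_Form.Char_Poly"
begin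

definition dprime :: "nat \<Rightarrow> nat" where
  "dprime d = (if odd d then d else d div 2)"

definition theta :: "'a::field \<Rightarrow> 'a \<Rightarrow> 'a \<Rightarrow> nat \<Rightarrow> 'a" where
  "theta q a lam i = a * inverse lam * q ^ (2*i) + inverse a * lam * inverse (q ^ (2*i))"

text \<open>Image of the basis vector m_k of M in W (quotient by span of delta m_i - m_(d'+i)),
  written in coordinates w.r.t. the basis (images of) m_0, ..., m_(d'-1):
  m_k is identified with delta^(k div d') m_(k mod d').\<close>
definition Wcoord :: "nat \<Rightarrow> 'a::field \<Rightarrow> nat \<Rightarrow> nat \<Rightarrow> 'a" where
  "Wcoord n \<delta> k r = (if r = k mod n then \<delta> ^ (k div n) else 0)"

text \<open>Matrix of A acting on W (w.r.t. basis m_0,...,m_(d'-1)), using A m_j = theta_j m_j + m_(j+1).\<close>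
definition A_on_W :: "nat \<Rightarrow> 'a::field \<Rightarrow> 'a \<Rightarrow> 'a \<Rightarrow> 'a \<Rightarrow> 'a mat" where
  "A_on_W n q a lam \<delta> = mat n n (\<lambda>(r, j).
      (if r = j then theta q a lam j else 0) + Wcoord n \<delta> (Suc j) r)"

end

theory Submission
  imports Defs
begin

(* The matrix of A on W is lower bidiagonal with diagonal theta_0, ..., theta_(d'-1), ones below
   the diagonal and delta in the top right corner, so expanding along the first row gives
   char_poly = prod (x - theta_i) - delta.
   For the second identity write theta_i = u Q^i + (u Q^i)^-1 with u = a/lam and Q = q^2, a
   primitive d'-th root of unity. Substituting x = t + t^-1 (possible since F is algebraically
   closed) factors each term as t^-1 (t - u Q^i)(t - u^-1 Q^-i), and prod_i (t - w Q^i) = t^d' - w^d'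
   gives prod (x - theta_i) = t^d' + t^-d' - (u^d' + u^-d').  So the product changes only by
   a constant when u is replaced by nu^-1, and the relation defining nu says that constant is delta. *)

definition primitive_root_of_unity :: "nat \<Rightarrow> 'a::field \<Rightarrow> bool" where
  "primitive_root_of_unity n z \<longleftrightarrow> 0 < n \<and> z ^ n = 1 \<and> (\<forall>k. 0 < k \<and> k < n \<longrightarrow> z ^ k \<noteq> 1)"

lemma primitive_root_of_unity_power_eq_1_iff:
  assumes "primitive_root_of_unity n z"
  shows "z ^ m = 1 \<longleftrightarrow> n dvd m"
proof -
  have "z ^ m = (z ^ n) ^ (m div n) * z ^ (m mod n)"
    by (simp flip: power_mult power_add)
  also have "\<dots> = z ^ (m mod n)"
    using assms by (simp add: primitive_root_of_unity_def)
  finally show ?thesis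
    using assms by (auto simp: primitive_root_of_unity_def dvd_eq_mod_eq_0)
qed

lemma primitive_root_of_unityI:
  assumes "0 < n" and "\<And>m. z ^ m = 1 \<longleftrightarrow> n dvd m"
  shows "primitive_root_of_unity n z"
  using assms by (auto simp: primitive_root_of_unity_def dest: dvd_imp_le)

lemma primitive_root_of_unity_nonzero:
  "primitive_root_of_unity n z \<Longrightarrow> z \<noteq> 0"
  by (auto simp: primitive_root_of_unity_def power_0_left)

lemma primitive_root_of_unity_inverse:
  assumes "primitive_root_of_unity n z"
  shows "primitive_root_of_unity n (inverse z)"
  using assms by (auto simp: primitive_root_of_unity_def power_inverse)

lemma inj_on_primitive_root_of_unity_power:
  assumes z: "primitive_root_of_unity n z"
  shows "inj_on (\<lambda>i. z ^ i) {..<n}"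
proof (rule linorder_inj_onI')
  fix i j assume "i \<in> {..<n}" "j \<in> {..<n}" "i < j"
  then have "\<not> n dvd j - i"
    by (auto dest: dvd_imp_le)
  then have "z ^ (j - i) \<noteq> 1"
    using primitive_root_of_unity_power_eq_1_iff[OF z] by simp
  moreover have "z ^ j = z ^ i * z ^ (j - i)"
    using \<open>i < j\<close> by (simp flip: power_add)
  ultimately show "z ^ i \<noteq> z ^ j"
    using primitive_root_of_unity_nonzero[OF z] by auto
qed

lemma dvd_double_iff_dprime_dvd:
  fixes d k :: nat
  shows "d dvd 2 * k \<longleftrightarrow> dprime d dvd k"
proof (cases "odd d")
  case True
  then have "coprime d 2"
    by (simp add: coprime_commute)
  then show ?thesis
    using True by (simp add: dprime_def coprime_dvd_mult_right_iff)
next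
  case False
  then obtain e where "d = 2 * e"
    by blast
  then show ?thesis
    by (simp add: dprime_def)
qed

lemma primitive_root_of_unity_square_dprime:
  assumes "primitive_root_of_unity d q"
  shows "primitive_root_of_unity (dprime d) (q ^ 2)"
proof (rule primitive_root_of_unityI)
  show "0 < dprime d"
    using assms by (auto simp: primitive_root_of_unity_def dprime_def)
  show "(q ^ 2) ^ m = 1 \<longleftrightarrow> dprime d dvd m" for m
    using primitive_root_of_unity_power_eq_1_iff[OF assms, of "2 * m"]
    by (simp add: power_mult dvd_double_iff_dprime_dvd)
qed

lemma two_le_dprime:
  assumes "0 < d" "d \<noteq> 1" "d \<noteq> 2"
  shows "2 \<le> dprime d"
  using assms by (simp add: dprime_def) presburger

lemma prod_diff_primitive_root_of_unity_powers:
  fixes t u :: "'a::field"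
  assumes z: "primitive_root_of_unity n z"
  shows "(\<Prod>i<n. t - u * z ^ i) = t ^ n - u ^ n"
proof (cases "u = 0")
  case True
  then show ?thesis
    using z by (simp add: primitive_root_of_unity_def power_0_left)
next
  case False
  define p where "p = (\<Prod>i<n. [:- (u * z ^ i), 1:])"
  define r where "r = monom 1 n - [:u ^ n:]"
  let ?roots = "(\<lambda>i. u * z ^ i) ` {..<n}"
  have n: "0 < n"
    using z by (simp add: primitive_root_of_unity_def)
  have "p = r"
  proof (rule poly_eqI_degree_lead_coeff[where A = ?roots])
    have "degree p = n"
      by (simp add: p_def degree_prod_eq_sum_degree)
    moreover have "lead_coeff p = 1"
      by (simp add: p_def lead_coeff_prod)
    moreover have "coeff r n = 1"
      using n by (cases n) (simp_all add: r_def)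
    moreover have "degree r \<le> n"
      by (simp add: r_def degree_diff_le degree_monom_le)
    ultimately show "coeff p n = coeff r n" "degree p \<le> n" "degree r \<le> n"
      by simp_all
    have "inj_on (\<lambda>i. u * z ^ i) {..<n}"
      using inj_on_primitive_root_of_unity_power[OF z] False by (simp add: inj_on_def)
    then show "n \<le> card ?roots"
      by (simp add: card_image)
    fix x assume "x \<in> ?roots"
    then obtain k where "k < n" "x = u * z ^ k"
      by blast
    moreover have "(u * z ^ k) ^ n = u ^ n * (z ^ n) ^ k"
      by (simp add: power_mult_distrib mult.commute flip: power_mult)
    then have "(u * z ^ k) ^ n = u ^ n"
      using z by (simp add: primitive_root_of_unity_def)
    ultimately show "poly p x = poly r x"
      by (auto simp: p_def r_def poly_prod poly_monom)
  qed
  then have "poly p t = poly r t"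
    by simp
  then show ?thesis
    by (simp add: p_def r_def poly_prod poly_monom)
qed

lemma prod_plus_inverse_diff_primitive_root_of_unity_powers:
  fixes t u :: "'a::field"
  assumes z: "primitive_root_of_unity n z" and "u \<noteq> 0" "t \<noteq> 0"
  shows "(\<Prod>i<n. (t + inverse t) - (u * z ^ i + inverse (u * z ^ i)))
       = (t ^ n + inverse (t ^ n)) - (u ^ n + inverse (u ^ n))"
proof -
  have z0: "z \<noteq> 0"
    using primitive_root_of_unity_nonzero[OF z] .
  have factor: "(t + inverse t) - (u * z ^ i + inverse (u * z ^ i))
      = inverse t * ((t - u * z ^ i) * (t - inverse u * inverse z ^ i))" for i
    using assms z0 by (simp add: field_simps power_inverse)
  have "(\<Prod>i<n. (t + inverse t) - (u * z ^ i + inverse (u * z ^ i)))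
      = inverse t ^ n * ((\<Prod>i<n. t - u * z ^ i) * (\<Prod>i<n. t - inverse u * inverse z ^ i))"
    unfolding factor by (simp add: prod.distrib)
  also have "\<dots> = inverse t ^ n * ((t ^ n - u ^ n) * (t ^ n - inverse u ^ n))"
    using prod_diff_primitive_root_of_unity_powers[OF z]
      prod_diff_primitive_root_of_unity_powers[OF primitive_root_of_unity_inverse[OF z]] by simp
  also have "\<dots> = (t ^ n + inverse (t ^ n)) - (u ^ n + inverse (u ^ n))"
    using assms by (simp add: field_simps power_inverse)
  finally show ?thesis .
qed

lemma infinite_UNIV_if_alg_closed:
  assumes alg_closed: "\<forall>p :: 'a::field poly. degree p \<ge> 1 \<longrightarrow> (\<exists>x. poly p x = 0)"
  shows "infinite (UNIV :: 'a set)"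
proof
  assume fin: "finite (UNIV :: 'a set)"
  define p :: "'a poly" where "p = (\<Prod>e\<in>UNIV. [:-e, 1:]) + 1"
  have "degree (\<Prod>e\<in>(UNIV :: 'a set). [:-e, 1:]) = card (UNIV :: 'a set)"
    by (simp add: degree_prod_eq_sum_degree)
  moreover have "card (UNIV :: 'a set) \<ge> 1"
    using fin by (simp add: Suc_le_eq card_gt_0_iff)
  ultimately have "degree p \<ge> 1"
    by (simp add: p_def degree_add_eq_left)
  then obtain x where "poly p x = 0"
    using alg_closed by blast
  moreover have "poly p x = 1"
    using fin by (simp add: p_def poly_prod prod_zero_iff)
  ultimately show False
    by simp
qed

lemma poly_eqI_infinite_UNIV:
  fixes p r :: "'a::idom poly"
  assumes "infinite (UNIV :: 'a set)" and "\<And>x. poly p x = poly r x"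
  shows "p = r"
proof (rule ccontr)
  assume "p \<noteq> r"
  then have "finite {x. poly (p - r) x = 0}"
    by (intro poly_roots_finite) simp
  moreover have "{x. poly (p - r) x = 0} = UNIV"
    using assms(2) by simp
  ultimately show False
    using assms(1) by simp
qed

lemma plus_inverse_surj_if_alg_closed:
  fixes x :: "'a::field"
  assumes alg_closed: "\<forall>p :: 'a poly. degree p \<ge> 1 \<longrightarrow> (\<exists>x. poly p x = 0)"
  obtains t where "t \<noteq> 0" and "x = t + inverse t"
proof -
  have "degree [:1, -x, 1:] \<ge> 1"
    by simp
  then obtain t where t: "poly [:1, -x, 1:] t = 0"
    using alg_closed by blast
  then have "t \<noteq> 0"
    by auto
  moreover from t have "x = t + inverse t"
    using \<open>t \<noteq> 0\<close> by (simp add: field_simps)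
  ultimately show thesis
    using that by blast
qed

lemma prod_plus_inverse_orbit_diff:
  fixes u v :: "'a::field"
  assumes alg_closed: "\<forall>p :: 'a poly. degree p \<ge> 1 \<longrightarrow> (\<exists>x. poly p x = 0)"
    and z: "primitive_root_of_unity n z" and "u \<noteq> 0" "v \<noteq> 0"
  shows "(\<Prod>i<n. [:- (u * z ^ i + inverse (u * z ^ i)), 1:])
         - (\<Prod>i<n. [:- (v * z ^ i + inverse (v * z ^ i)), 1:])
       = [:(v ^ n + inverse (v ^ n)) - (u ^ n + inverse (u ^ n)):]"
proof (rule poly_eqI_infinite_UNIV[OF infinite_UNIV_if_alg_closed[OF alg_closed]])
  fix x :: 'a
  obtain t where "t \<noteq> 0" and x: "x = t + inverse t"
    using plus_inverse_surj_if_alg_closed[OF alg_closed] .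
  have linear: "poly [:- c, 1:] x = (t + inverse t) - c" for c
    by (simp add: x)
  have "poly (\<Prod>i<n. [:- (w * z ^ i + inverse (w * z ^ i)), 1:]) x
      = (t ^ n + inverse (t ^ n)) - (w ^ n + inverse (w ^ n))" if "w \<noteq> 0" for w
    unfolding poly_prod linear
    by (rule prod_plus_inverse_diff_primitive_root_of_unity_powers[OF z that \<open>t \<noteq> 0\<close>])
  then show "poly ((\<Prod>i<n. [:- (u * z ^ i + inverse (u * z ^ i)), 1:])
         - (\<Prod>i<n. [:- (v * z ^ i + inverse (v * z ^ i)), 1:])) x
       = poly [:(v ^ n + inverse (v ^ n)) - (u ^ n + inverse (u ^ n)):] x"
    using assms by simp
qed

lemma det_lower_bidiagonal_plus_corner:
  fixes M :: "'a::comm_ring_1 mat"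
  assumes M: "M \<in> carrier_mat n n" and n: "2 \<le> n"
    and zero: "\<And>i j. i < n \<Longrightarrow> j < n \<Longrightarrow> i \<noteq> j \<Longrightarrow> i \<noteq> Suc j \<Longrightarrow> (i, j) \<noteq> (0, n - 1)
                 \<Longrightarrow> M $$ (i, j) = 0"
  shows "det M = (\<Prod>i<n. M $$ (i, i))
               + (-1) ^ (n - 1) * M $$ (0, n - 1) * (\<Prod>i<n - 1. M $$ (Suc i, i))"
proof -
  have dim: "dim_row M = n"
    using M by simp
  have "det M = (\<Sum>j<n. M $$ (0, j) * cofactor M 0 j)"
    using n by (intro laplace_expansion_row[OF M]) simp
  also have "\<dots> = (\<Sum>j\<in>{0, n - 1}. M $$ (0, j) * cofactor M 0 j)"
    using n zero by (intro sum.mono_neutral_right) auto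
  also have "\<dots> = M $$ (0, 0) * cofactor M 0 0 + M $$ (0, n - 1) * cofactor M 0 (n - 1)"
    using n by simp
  also have "cofactor M 0 0 = (\<Prod>i<n - 1. M $$ (Suc i, Suc i))"
  proof -
    let ?D = "mat_delete M 0 0"
    have D: "?D \<in> carrier_mat (n - 1) (n - 1)"
      using M by (rule mat_delete_carrier)
    have entry: "?D $$ (i, j) = M $$ (Suc i, Suc j)" if "i < n - 1" "j < n - 1" for i j
      using that M by (simp add: mat_delete_def)
    have "det ?D = prod_list (diag_mat ?D)"
      using D entry zero by (intro det_lower_triangular) auto
    then show ?thesis
      using D entry dim by (simp add: cofactor_def prod_list_diag_prod atLeast0LessThan)
  qed
  also have "cofactor M 0 (n - 1) = (-1) ^ (n - 1) * (\<Prod>i<n - 1. M $$ (Suc i, i))"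
  proof -
    let ?D = "mat_delete M 0 (n - 1)"
    have D: "?D \<in> carrier_mat (n - 1) (n - 1)"
      using M by (rule mat_delete_carrier)
    have entry: "?D $$ (i, j) = M $$ (Suc i, j)" if "i < n - 1" "j < n - 1" for i j
      using that M by (simp add: mat_delete_def)
    have "upper_triangular ?D"
      using D entry zero by (auto simp: upper_triangular_def)
    then have "det ?D = prod_list (diag_mat ?D)"
      using D by (rule det_upper_triangular)
    then show ?thesis
      using D entry dim by (simp add: cofactor_def prod_list_diag_prod atLeast0LessThan)
  qed
  also have "M $$ (0, 0) * (\<Prod>i<n - 1. M $$ (Suc i, Suc i)) = (\<Prod>i<n. M $$ (i, i))"
    using n prod.lessThan_Suc_shift[of "\<lambda>i. M $$ (i, i)" "n - 1"] by simp
  finally show ?thesis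
    by (simp add: mult.left_commute)
qed

lemma theta_eq_plus_inverse:
  "theta q a lam i = a * inverse lam * (q ^ 2) ^ i + inverse (a * inverse lam * (q ^ 2) ^ i)"
  unfolding theta_def power_mult by (simp add: mult.commute)

lemma A_on_W_index:
  assumes "r < n" "j < n"
  shows "A_on_W n q a lam \<delta> $$ (r, j)
       = (if r = j then theta q a lam j else 0) + (if r = Suc j then 1 else 0)
         + (if (r, j) = (0, n - 1) then \<delta> else 0)"
proof (cases "Suc j = n")
  case True
  then show ?thesis
    using assms by (simp add: A_on_W_def Wcoord_def)
next
  case False
  then have "Suc j < n" "j \<noteq> n - 1"
    using assms by simp_all
  then show ?thesis
    using assms by (simp add: A_on_W_def Wcoord_def)
qed

lemma char_poly_A_on_W:
  assumes n: "2 \<le> n"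
  shows "char_poly (A_on_W n q a lam \<delta>) = (\<Prod>i<n. [:- theta q a lam i, 1:]) - [:\<delta>:]"
proof -
  let ?M = "char_poly_matrix (A_on_W n q a lam \<delta>)"
  have dim: "dim_row (A_on_W n q a lam \<delta>) = n" "dim_col (A_on_W n q a lam \<delta>) = n"
    by (simp_all add: A_on_W_def)
  have entry: "?M $$ (i, j) =
      (if i = j then [:- theta q a lam j, 1:] else if i = Suc j then [:-1:]
       else if (i, j) = (0, n - 1) then [:-\<delta>:] else 0)" if "i < n" "j < n" for i j
    using that n by (auto simp: char_poly_matrix_def A_on_W_index dim)
  have "char_poly (A_on_W n q a lam \<delta>)
      = (\<Prod>i<n. [:- theta q a lam i, 1:]) + (-1) ^ (n - 1) * [:-\<delta>:] * [:-1:] ^ (n - 1)"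
    unfolding char_poly_def
    using n entry by (subst det_lower_bidiagonal_plus_corner[of _ n]) (auto simp: A_on_W_def)
  also have "(-1) ^ (n - 1) * [:-\<delta>:] * [:-1:] ^ (n - 1) = - [:\<delta>:]"
    by (simp add: mult.commute flip: power_mult_distrib one_pCons)
  finally show ?thesis
    by simp
qed

theorem lemma8p3:
  fixes q a b c lam \<delta> \<nu> :: "'a::field"
    and d :: nat
  assumes alg_closed: "\<forall>p :: 'a poly. degree p \<ge> 1 \<longrightarrow> (\<exists>x. poly p x = 0)"
    and q_root: "d > 0" "q ^ d = 1" "\<forall>k. 0 < k \<and> k < d \<longrightarrow> q ^ k \<noteq> 1"
    and d_ne: "d \<notin> {1, 2, 4}"
    and nz: "a \<noteq> 0" "b \<noteq> 0" "c \<noteq> 0" "lam \<noteq> 0" "\<nu> \<noteq> 0"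
    and nu_eq: "\<nu> ^ dprime d + inverse (\<nu> ^ dprime d)
                 = \<delta> + a ^ dprime d * inverse (lam ^ dprime d) + inverse (a ^ dprime d) * lam ^ dprime d"
  shows "char_poly (A_on_W (dprime d) q a lam \<delta>)
           = (\<Prod>i<dprime d. [: - (inverse \<nu> * q ^ (2*i) + \<nu> * inverse (q ^ (2*i))), 1 :])
       \<and> (\<Prod>i<dprime d. [: - (inverse \<nu> * q ^ (2*i) + \<nu> * inverse (q ^ (2*i))), 1 :])
           = (\<Prod>i<dprime d. [: - theta q a lam i, 1 :]) - [: \<delta> :]"
proof -
  \<comment> \<open>Only the action of \<open>A\<close> enters.\<close>
  define n where "n = dprime d"
  define u where "u = inverse \<nu>"
  define v where "v = a * inverse lam"
  have "primitive_root_of_unity d q"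
    using q_root by (simp add: primitive_root_of_unity_def)
  then have z: "primitive_root_of_unity n (q ^ 2)"
    unfolding n_def by (rule primitive_root_of_unity_square_dprime)
  have n: "2 \<le> n"
    using q_root(1) d_ne by (simp add: n_def two_le_dprime)
  have vartheta: "inverse \<nu> * q ^ (2 * i) + \<nu> * inverse (q ^ (2 * i))
      = u * (q ^ 2) ^ i + inverse (u * (q ^ 2) ^ i)" for i
    by (simp add: u_def power_mult)
  have "(v ^ n + inverse (v ^ n)) - (u ^ n + inverse (u ^ n)) = - \<delta>"
    using nu_eq by (simp add: n_def u_def v_def power_mult_distrib power_inverse algebra_simps)
  then have "(\<Prod>i<n. [:- (inverse \<nu> * q ^ (2 * i) + \<nu> * inverse (q ^ (2 * i))), 1:])
           - (\<Prod>i<n. [:- theta q a lam i, 1:]) = [:- \<delta>:]"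
    using prod_plus_inverse_orbit_diff[OF alg_closed z, of u v] nz
    by (simp add: u_def v_def vartheta theta_eq_plus_inverse)
  then have "(\<Prod>i<n. [:- (inverse \<nu> * q ^ (2 * i) + \<nu> * inverse (q ^ (2 * i))), 1:])
           = (\<Prod>i<n. [:- theta q a lam i, 1:]) - [:\<delta>:]"
    by (simp add: eq_diff_eq diff_eq_eq)
  then show ?thesis
    using char_poly_A_on_W[OF n] by (simp add: n_def)
qed

end
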